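(* Let $IS\in\{\Box,\blacksquare\}^2$ and let $\tau$ be a correct compositional translation from $\mathrm{SYNCSIMPLE}$ into $\mathrm{LOCKSIMPLE}_{2,IS}$ of blocking type $(P_1P_1,P_2P_2)$. Then $\tau(!)$ does not start with $P_1$.
   Context: $\mathrm{SYNCSIMPLE}$: subprocesses $\mathcal{U} ::= \checkmark \mid 0 \mid\, !\mathcal{U} \mid\, ?\mathcal{U}$; processes are finite parallel compositions ($\mid$ associative, commutative, $0$ a unit). Reduction: $!\mathcal{U}_1\mid ?\mathcal{U}_2\mid \mathcal{P}\to \mathcal{U}_1\mid\mathcal{U}_2\mid\mathcal{P}$. Successful: of form $\checkmark\mid\mathcal{P}$; may-convergent: reduces to a successful process; must-convergent: every reachable process is may-convergent. $\mathrm{LOCKSIMPLE}_{k,IS}$ ($IS\in\{\Box,\blacksquare\}^k$, $\Box$ empty, $\blacksquare$ full): subprocesses are words over $\{P_1,T_1,\dots,P_k,T_k\}$ followed by $0$ or $\checkmark$; states $(\mathcal{P},C)$ reduce by $(P_i\mathcal{U}\mid\mathcal{P},C)\to(\mathcal{U}\mid\mathcal{P},C[C_i:=\blacksquare])$ only if $C_i=\Box$, and $(T_i\mathcal{U}\mid\mathcal{P},C)\to(\mathcal{U}\mid\mathcal{P},C[C_i:=\Box])$ always. Success = process contains $\checkmark$; a process $\mathcal{P}$ is may/must-convergent iff the state $(\mathcal{P},IS)$ is. A compositional translation $\tau$ is given by words $\tau(!),\tau(?)$ with $\tau(0)=0$, $\tau(\checkmark)=\checkmark$, $\tau(!\mathcal{U})=\tau(!)\tau(\mathcal{U})$,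 $\tau(?\mathcal{U})=\tau(?)\tau(\mathcal{U})$, $\tau$ commuting with $\mid$; correct = preserves and reflects may- and must-convergence. Blocking type of a word $S$: execute $S$ alone from $IS$; if it gets stuck at an occurrence of $P_i$ that is the first symbol from $\{P_i,T_i\}$ in $S$ the type is $P_i$, if stuck at a later occurrence of $P_i$ the type is $P_iP_i$; $\tau$ has blocking type $(W_1,W_2)$ if $\tau(!)$ has type $W_1$ and $\tau(?)$ type $W_2$. *)

theory Defs
  imports Main "HOL-Library.Multiset"
begin

datatype ssub = SCheck | SZero | SSend ssub | SRecv ssub

text \<open>Processes are finite parallel compositions, i.e. multisets of subprocesses
  (associativity/commutativity of parallel composition is built in; a 0 component
  has no effect on reduction or success).\<close>
type_synonym sproc = "ssub multiset"

inductive sync_step :: "sproc \<Rightarrow> sproc \<Rightarrow> bool" where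
  "sync_step (add_mset (SSend u1) (add_mset (SRecv u2) P)) (add_mset u1 (add_mset u2 P))"

definition sync_successful :: "sproc \<Rightarrow> bool" where
  "sync_successful P \<longleftrightarrow> SCheck \<in># P"

definition sync_may :: "sproc \<Rightarrow> bool" where
  "sync_may P \<longleftrightarrow> (\<exists>Q. sync_step\<^sup>*\<^sup>* P Q \<and> sync_successful Q)"

definition sync_must :: "sproc \<Rightarrow> bool" where
  "sync_must P \<longleftrightarrow> (\<forall>Q. sync_step\<^sup>*\<^sup>* P Q \<longrightarrow> sync_may Q)"

text \<open>Symbols \<open>LP i\<close> (= P_i) and \<open>LT i\<close> (= T_i) with lock index i (1-based).
  Lock contents: True = full, False = empty.\<close>
datatype lsym = LP nat | LT nat

text \<open>A subprocess is a word followed by 0 (False) or the success symbol (True).\<close>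
type_synonym lsub = "lsym list \<times> bool"
type_synonym lproc = "lsub multiset"
type_synonym locks = "nat \<Rightarrow> bool"

definition word_over :: "nat \<Rightarrow> lsym list \<Rightarrow> bool" where
  "word_over k w \<longleftrightarrow> (\<forall>s \<in> set w. s \<in> {LP i | i. 1 \<le> i \<and> i \<le> k} \<union> {LT i | i. 1 \<le> i \<and> i \<le> k})"

inductive lock_step :: "lproc \<times> locks \<Rightarrow> lproc \<times> locks \<Rightarrow> bool" where
  put: "\<not> C i \<Longrightarrow> lock_step (add_mset (LP i # w, b) P, C) (add_mset (w, b) P, C(i := True))"
| take: "lock_step (add_mset (LT i # w, b) P, C) (add_mset (w, b) P, C(i := False))"

definition lock_successful :: "lproc \<times> locks \<Rightarrow> bool" where
  "lock_successful S \<longleftrightarrow> ([], True) \<in># fst S"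

definition lock_may_state :: "lproc \<times> locks \<Rightarrow> bool" where
  "lock_may_state S \<longleftrightarrow> (\<exists>S'. lock_step\<^sup>*\<^sup>* S S' \<and> lock_successful S')"

definition lock_must_state :: "lproc \<times> locks \<Rightarrow> bool" where
  "lock_must_state S \<longleftrightarrow> (\<forall>S'. lock_step\<^sup>*\<^sup>* S S' \<longrightarrow> lock_may_state S')"

definition lock_may :: "locks \<Rightarrow> lproc \<Rightarrow> bool" where
  "lock_may IS P \<longleftrightarrow> lock_may_state (P, IS)"

definition lock_must :: "locks \<Rightarrow> lproc \<Rightarrow> bool" where
  "lock_must IS P \<longleftrightarrow> lock_must_state (P, IS)"

fun tr_sub :: "lsym list \<Rightarrow> lsym list \<Rightarrow> ssub \<Rightarrow> lsub" where
  "tr_sub ws wr SCheck = ([], True)"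
| "tr_sub ws wr SZero = ([], False)"
| "tr_sub ws wr (SSend u) = (ws @ fst (tr_sub ws wr u), snd (tr_sub ws wr u))"
| "tr_sub ws wr (SRecv u) = (wr @ fst (tr_sub ws wr u), snd (tr_sub ws wr u))"

definition tr :: "lsym list \<Rightarrow> lsym list \<Rightarrow> sproc \<Rightarrow> lproc" where
  "tr ws wr P = image_mset (tr_sub ws wr) P"

text \<open>Translation given by words ws = tau(!) and wr = tau(?) into LOCKSIMPLE_{k,IS}
  is correct iff it preserves and reflects may- and must-convergence.\<close>
definition correct_translation :: "nat \<Rightarrow> locks \<Rightarrow> lsym list \<Rightarrow> lsym list \<Rightarrow> bool" where
  "correct_translation k IS ws wr \<longleftrightarrow>
     word_over k ws \<and> word_over k wr \<and>
     (\<forall>P. (sync_may P \<longleftrightarrow> lock_may IS (tr ws wr P)) \<and>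
          (sync_must P \<longleftrightarrow> lock_must IS (tr ws wr P)))"

text \<open>Deterministic execution of a word alone: None = gets stuck.\<close>
fun exec_word :: "locks \<Rightarrow> lsym list \<Rightarrow> locks option" where
  "exec_word C [] = Some C"
| "exec_word C (LP i # w) = (if C i then None else exec_word (C(i := True)) w)"
| "exec_word C (LT i # w) = exec_word (C(i := False)) w"

definition stuck_at :: "locks \<Rightarrow> lsym list \<Rightarrow> nat \<Rightarrow> nat \<Rightarrow> bool" where
  "stuck_at IS S j i \<longleftrightarrow> j < length S \<and> S ! j = LP i \<and>
     (\<exists>C. exec_word IS (take j S) = Some C \<and> C i)"

datatype btype = BT_P nat | BT_PP nat

definition has_btype :: "locks \<Rightarrow> lsym list \<Rightarrow> btype \<Rightarrow> bool" where
  "has_btype IS S t \<longleftrightarrow> (case t of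
      BT_P i \<Rightarrow> \<exists>j. stuck_at IS S j i \<and> (\<forall>l<j. S ! l \<noteq> LP i \<and> S ! l \<noteq> LT i)
    | BT_PP i \<Rightarrow> \<exists>j. stuck_at IS S j i \<and> (\<exists>l<j. S ! l = LP i \<or> S ! l = LT i))"

end

theory Submission
  imports Defs
begin

(* If \<tau>(!) = P_1 w, let \<tau>(?) run alone up to its blocking P_2: then lock 2 is full
   while \<tau>(!) waits at its initial P_1. The translations of the must-convergent processes
   !\<checkmark> | ?!\<checkmark> and !?0 | ?\<checkmark> never reach a state in which both
   components wait at puts on full locks. Hence, whenever \<tau>(!) waits at P_1 and \<tau>(?)
   at P_2 with one of the two locks full, the other component runs on until it waits again at
   its own put with its own lock full, and it becomes strictly shorter. It cannot run to its end:
   the test process then restarts the other word, which reaches its blocking put with that lock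
   full once more (the state of a lock after a word using it does not depend on the initial
   state), a deadlock. The restarted word cannot block earlier at a put on the other lock either:
   that put would be the first use of its lock, and such a put already deadlocks against the
   other word's blocking put. *)

lemma sync_step_offers: "sync_step P Q \<Longrightarrow> (\<exists>u. SSend u \<in># P) \<and> (\<exists>u. SRecv u \<in># P)"
  by (cases rule: sync_step.cases) auto

lemma sync_step_pair: "sync_step {#SSend a, SRecv c#} Q \<longleftrightarrow> Q = {#a, c#}"
proof
  assume "sync_step {#SSend a, SRecv c#} Q"
  then show "Q = {#a, c#}"
  proof cases
    case (1 u1 u2 P)
    then have "SSend u1 \<in># {#SSend a, SRecv c#}" "SRecv u2 \<in># {#SSend a, SRecv c#}" by simp_all
    then have "u1 = a" "u2 = c" by auto
    with 1 show ?thesis by simp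
  qed
next
  show "Q = {#a, c#} \<Longrightarrow> sync_step {#SSend a, SRecv c#} Q"
    using sync_step.intros[of a c "{#}"] by simp
qed

lemma sync_must_pair:
  assumes "SCheck \<in># {#a, c#}" and "\<And>Q. \<not> sync_step {#a, c#} Q"
  shows "sync_must {#SSend a, SRecv c#}"
  unfolding sync_must_def
proof (intro allI impI)
  have final: "sync_may {#a, c#}"
    using assms(1) by (auto simp: sync_may_def sync_successful_def)
  fix Q assume "sync_step\<^sup>*\<^sup>* {#SSend a, SRecv c#} Q"
  then show "sync_may Q"
  proof (cases rule: converse_rtranclpE)
    case base
    then show ?thesis
      using final sync_step_pair[of a c "{#a, c#}"] unfolding sync_may_def
      by (blast intro: converse_rtranclp_into_rtranclp)
  next
    case (step Q')
    then show ?thesis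
      using final assms(2) sync_step_pair by (metis converse_rtranclpE)
  qed
qed

definition uses_lock :: "nat \<Rightarrow> lsym list \<Rightarrow> bool" where
  "uses_lock i w \<longleftrightarrow> LP i \<in> set w \<or> LT i \<in> set w"

lemma exec_word_append:
  "exec_word C (s @ t) = (case exec_word C s of None \<Rightarrow> None | Some C' \<Rightarrow> exec_word C' t)"
  by (induction C s rule: exec_word.induct) (auto simp: fun_upd_def)

lemma exec_word_NoneE:
  assumes "exec_word C w = None"
  obtains s i r C' where "w = s @ LP i # r" "exec_word C s = Some C'" "C' i"
  using assms
proof (induction C w arbitrary: thesis rule: exec_word.induct)
  case (2 C i w)
  show ?case
  proof (cases "C i")
    case True
    then show ?thesis using "2.prems"(1)[of "[]"] by simp
  next
    case False
    with "2.prems"(2) have "exec_word (C(i := True)) w = None" by simp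
    then obtain s l r C' where "w = s @ LP l # r" "exec_word (C(i := True)) s = Some C'" "C' l"
      using "2.IH"[OF False] by blast
    with False show ?thesis using "2.prems"(1)[of "LP i # s"] by simp
  qed
next
  case (3 C i w)
  then show ?case by (metis append_Cons exec_word.simps(3))
qed simp

lemma exec_word_unused_lock:
  "exec_word C s = Some C' \<Longrightarrow> \<not> uses_lock i s \<Longrightarrow> C' i = C i"
  by (induction C s rule: exec_word.induct) (auto simp: uses_lock_def split: if_splits)

lemma exec_word_uses_lock_eq:
  assumes "uses_lock i s" "exec_word C s = Some C'" "exec_word D s = Some D'"
  shows "C' i = D' i"
proof -
  obtain s1 z s2 where s: "s = s1 @ z # s2" and z: "z = LP i \<or> z = LT i" and "\<not> uses_lock i s2"
    using split_list_last_prop[of s "\<lambda>z. z = LP i \<or> z = LT i"] assms(1)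
    by (auto simp: uses_lock_def)
  have "E' i = (z = LP i)" if "exec_word E (z # s2) = Some E'" for E E'
  proof -
    have "exec_word (E(i := z = LP i)) s2 = Some E'"
      using that z by (auto split: if_splits)
    then show ?thesis using exec_word_unused_lock \<open>\<not> uses_lock i s2\<close> by fastforce
  qed
  with assms(2,3) show ?thesis
    unfolding s exec_word_append by (auto split: option.splits)
qed

lemma lock_steps_exec_word:
  "exec_word C s = Some C' \<Longrightarrow> lock_step\<^sup>*\<^sup>* (add_mset (s @ w, b) P, C) (add_mset (w, b) P, C')"
proof (induction C s rule: exec_word.induct)
  case (2 C i s)
  then have "lock_step (add_mset (LP i # s @ w, b) P, C) (add_mset (s @ w, b) P, C(i := True))"
    by (auto intro: lock_step.put split: if_splits)
  with 2 show ?case by (auto simp: fun_upd_def split: if_splits intro: converse_rtranclp_into_rtranclp)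
next
  case (3 C i s)
  have "lock_step (add_mset (LT i # s @ w, b) P, C) (add_mset (s @ w, b) P, C(i := False))"
    by (rule lock_step.take)
  with 3 show ?case by (auto simp: fun_upd_def intro: converse_rtranclp_into_rtranclp)
qed simp

definition pair_run :: "lsym list \<times> lsym list \<times> locks \<Rightarrow> lsym list \<times> lsym list \<times> locks \<Rightarrow> bool" where
  "pair_run = (\<lambda>(u, v, C) (u', v', C').
     \<forall>\<alpha> \<beta> x y. lock_step\<^sup>*\<^sup>* ({#(u @ \<alpha>, x), (v @ \<beta>, y)#}, C) ({#(u' @ \<alpha>, x), (v' @ \<beta>, y)#}, C'))"

lemma pair_run_lock_steps:
  "pair_run (u, v, C) (u', v', C') \<Longrightarrow>
     lock_step\<^sup>*\<^sup>* ({#(u @ \<alpha>, x), (v @ \<beta>, y)#}, C) ({#(u' @ \<alpha>, x), (v' @ \<beta>, y)#}, C')"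
  by (simp add: pair_run_def)

lemma pair_run_trans:
  "pair_run (u, v, C) (u', v', C') \<Longrightarrow> pair_run (u', v', C') (u'', v'', C'') \<Longrightarrow> pair_run (u, v, C) (u'', v'', C'')"
  unfolding pair_run_def by (simp, meson rtranclp_trans)

lemma pair_run_commute: "pair_run (u, v, C) (u', v', C') \<longleftrightarrow> pair_run (v, u, C) (v', u', C')"
  unfolding pair_run_def by (simp add: add_mset_commute) blast

lemma pair_run_exec_left: "exec_word C s = Some C' \<Longrightarrow> pair_run (s @ u, v, C) (u, v, C')"
  using lock_steps_exec_word by (simp add: pair_run_def)

lemma pair_run_exec_right: "exec_word C s = Some C' \<Longrightarrow> pair_run (u, s @ v, C) (u, v, C')"
  using pair_run_exec_left pair_run_commute by blast

definition blocked_pair_reachable :: "lproc \<times> locks \<Rightarrow> bool" where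
  "blocked_pair_reachable S \<longleftrightarrow>
     (\<exists>i j u v x y C. lock_step\<^sup>*\<^sup>* S ({#(LP i # u, x), (LP j # v, y)#}, C) \<and> C i \<and> C j)"

lemma blocked_pair_stuck:
  assumes "C i" "C j"
  shows "\<not> lock_step ({#(LP i # u, x), (LP j # v, y)#}, C) S"
proof
  assume "lock_step ({#(LP i # u, x), (LP j # v, y)#}, C) S"
  then show False
  proof cases
    case (put l w b P)
    then have "(LP l # w, b) \<in># {#(LP i # u, x), (LP j # v, y)#}" by simp
    then have "l = i \<or> l = j" by auto
    with put assms show False by auto
  next
    case (take l w b P)
    then have "(LT l # w, b) \<in># {#(LP i # u, x), (LP j # v, y)#}" by simp
    then show False by auto
  qed
qed

lemma lock_must_not_blocked_pair_reachable:
  assumes "lock_must IS P"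
  shows "\<not> blocked_pair_reachable (P, IS)"
proof
  assume "blocked_pair_reachable (P, IS)"
  then obtain i j u v x y C where reach: "lock_step\<^sup>*\<^sup>* (P, IS) ({#(LP i # u, x), (LP j # v, y)#}, C)"
    and "C i" "C j" unfolding blocked_pair_reachable_def by blast
  have "lock_may_state ({#(LP i # u, x), (LP j # v, y)#}, C)"
    using assms reach unfolding lock_must_def lock_must_state_def by blast
  then obtain S where "lock_step\<^sup>*\<^sup>* ({#(LP i # u, x), (LP j # v, y)#}, C) S" "lock_successful S"
    unfolding lock_may_state_def by blast
  then show False
    using blocked_pair_stuck[OF \<open>C i\<close> \<open>C j\<close>]
    by (cases rule: converse_rtranclpE) (auto simp: lock_successful_def)
qed

lemma blocked_pair_reachable_steps:
  "lock_step\<^sup>*\<^sup>* S S' \<Longrightarrow> blocked_pair_reachable S' \<Longrightarrow> blocked_pair_reachable S"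
  unfolding blocked_pair_reachable_def by (meson rtranclp_trans)

lemma pair_run_blocked:
  "pair_run (u, v, C) (LP i # u', LP j # v', C') \<Longrightarrow> C' i \<Longrightarrow> C' j \<Longrightarrow>
     blocked_pair_reachable ({#(u @ \<alpha>, x), (v @ \<beta>, y)#}, C)"
  unfolding blocked_pair_reachable_def using pair_run_lock_steps by fastforce

lemma has_btype_PPE:
  assumes "has_btype IS w (BT_PP i)"
  obtains s r C where "w = s @ LP i # r" "exec_word IS s = Some C" "C i" "uses_lock i s"
proof -
  from assms obtain j C where j: "j < length w" "w ! j = LP i" "exec_word IS (take j w) = Some C" "C i"
    and "\<exists>l<j. w ! l = LP i \<or> w ! l = LT i"
    unfolding has_btype_def stuck_at_def by auto
  then have "uses_lock i (take j w)"
    unfolding uses_lock_def by (metis in_set_conv_nth length_take min.absorb4 nth_take)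
  moreover have "w = take j w @ LP i # drop (Suc j) w"
    using j by (metis id_take_nth_drop)
  ultimately show thesis using that j by blast
qed

definition first_use_is_put :: "nat \<Rightarrow> lsym list \<Rightarrow> bool" where
  "first_use_is_put i w \<longleftrightarrow> (\<exists>s r. w = s @ LP i # r \<and> \<not> uses_lock i s)"

lemma not_first_use_is_put:
  assumes live: "\<not> blocked_pair_reachable ({#(u @ \<alpha>, x), (v @ \<beta>, y)#}, IS)"
    and v: "v = s @ LP b # r" "exec_word IS s = Some D" "D b"
  shows "\<not> first_use_is_put b u"
proof
  assume "first_use_is_put b u"
  then obtain s' r' where u: "u = s' @ LP b # r'" and "\<not> uses_lock b s'"
    unfolding first_use_is_put_def by blast
  have start: "pair_run (u, v, IS) (u, LP b # r, D)"
    using pair_run_exec_right[OF v(2)] v(1) by simp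
  have blocked: False if "pair_run (u, v, IS) (LP i # u', LP b # r, E)" "E i" "E b" for i u' E
    using pair_run_blocked[OF that] live by blast
  show False
  proof (cases "exec_word D s'")
    case (Some E)
    then have "E b" using exec_word_unused_lock \<open>\<not> uses_lock b s'\<close> \<open>D b\<close> by metis
    moreover have "pair_run (u, v, IS) (LP b # r', LP b # r, E)"
      using pair_run_trans[OF start] pair_run_exec_left[OF Some] u by simp
    ultimately show False using blocked by blast
  next
    case None
    then obtain s1 i r1 E where s': "s' = s1 @ LP i # r1" and s1: "exec_word D s1 = Some E" and "E i"
      by (rule exec_word_NoneE)
    have "\<not> uses_lock b s1" using \<open>\<not> uses_lock b s'\<close> s' by (auto simp: uses_lock_def)
    then have "E b" using exec_word_unused_lock[OF s1] \<open>D b\<close> by simp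
    moreover have "pair_run (u, v, IS) (LP i # r1 @ LP b # r', LP b # r, E)"
      using pair_run_trans[OF start] pair_run_exec_left[OF s1] u s' by simp
    ultimately show False using blocked \<open>E i\<close> by blast
  qed
qed

lemma pair_run_right_not_done:
  assumes words: "set u \<subseteq> {LP a, LT a, LP b, LT b}"
    and live: "\<not> blocked_pair_reachable ({#(u, x), (v @ u, y)#}, IS)"
    and u_type: "has_btype IS u (BT_PP a)"
    and u_guarded: "\<not> first_use_is_put b u"
  shows "\<not> pair_run (u, v, IS) (LP a # u', [], S)"
proof
  assume "pair_run (u, v, IS) (LP a # u', [], S)"
  then have reach: "lock_step\<^sup>*\<^sup>* ({#(u, x), (v @ u, y)#}, IS) ({#(LP a # u', x), (u, y)#}, S)"
    using pair_run_lock_steps[of u v IS "LP a # u'" "[]" S "[]" x u y] by simp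
  have blocked: False if "pair_run (LP a # u', u, S) (LP i # u1, LP j # v1, E)" "E i" "E j"
    for i j u1 v1 E
    using pair_run_blocked[OF that, of "[]" x "[]" y] blocked_pair_reachable_steps[OF reach] live
    by simp
  obtain s0 r0 CA where u: "u = s0 @ LP a # r0" and s0: "exec_word IS s0 = Some CA" "CA a"
    "uses_lock a s0" using u_type by (rule has_btype_PPE)
  show False
  proof (cases "exec_word S s0")
    case (Some S')
    have "S' a" using exec_word_uses_lock_eq[OF \<open>uses_lock a s0\<close> Some s0(1)] \<open>CA a\<close> by simp
    moreover have "pair_run (LP a # u', u, S) (LP a # u', LP a # r0, S')"
      using pair_run_exec_right[OF Some] u by simp
    ultimately show False using blocked by blast
  next
    case None
    then obtain s1 i r1 E where s0': "s0 = s1 @ LP i # r1" and s1: "exec_word S s1 = Some E"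
      and "E i" by (rule exec_word_NoneE)
    have "pair_run (LP a # u', u, S) (LP a # u', LP i # r1 @ LP a # r0, E)"
      using pair_run_exec_right[OF s1] u s0' by simp
    then have "\<not> E a" using blocked \<open>E i\<close> by blast
    then have "i = b" using words u s0' \<open>E i\<close> by auto
    then have "uses_lock b s1"
      using u_guarded u s0' unfolding first_use_is_put_def by auto
    obtain F where F: "exec_word IS s1 = Some F" "\<not> F b"
      using s0(1) \<open>i = b\<close> unfolding s0' exec_word_append by (auto split: option.splits if_splits)
    show False
      using exec_word_uses_lock_eq[OF \<open>uses_lock b s1\<close> s1 F(1)] F(2) \<open>E i\<close> \<open>i = b\<close> by simp
  qed
qed

lemma pair_run_advance_right:
  assumes words: "set u \<subseteq> {LP a, LT a, LP b, LT b}" "set v' \<subseteq> {LP a, LT a, LP b, LT b}"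
    and live: "\<not> blocked_pair_reachable ({#(u, x), (v @ u, y)#}, IS)"
    and u_type: "has_btype IS u (BT_PP a)"
    and u_guarded: "\<not> first_use_is_put b u"
    and run: "pair_run (u, v, IS) (LP a # u', LP b # v', C)" "C a" "\<not> C b"
  obtains v'' C' where "pair_run (u, v, IS) (LP a # u', LP b # v'', C')" "C' b" "\<not> C' a"
    "set v'' \<subseteq> set v'" "length v'' < length v'"
proof -
  have run1: "pair_run (u, v, IS) (LP a # u', v', C(b := True))"
    using pair_run_trans[OF run(1)] pair_run_exec_right[of C "[LP b]"] \<open>\<not> C b\<close> by simp
  show thesis
  proof (cases "exec_word (C(b := True)) v'")
    case None
    then obtain s i r E where v': "v' = s @ LP i # r" and s: "exec_word (C(b := True)) s = Some E"
      and "E i" by (rule exec_word_NoneE)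
    have "pair_run (LP a # u', v', C(b := True)) (LP a # u', LP i # r, E)"
      unfolding v' by (rule pair_run_exec_right[OF s])
    with run1 have run2: "pair_run (u, v, IS) (LP a # u', LP i # r, E)"
      by (rule pair_run_trans)
    then have "\<not> E a" using pair_run_blocked[OF run2 _ \<open>E i\<close>, of "[]" x u y] live by auto
    moreover have "i = b" using words(2) v' \<open>E i\<close> \<open>\<not> E a\<close> by auto
    moreover have "set r \<subseteq> set v'" "length r < length v'" using v' by auto
    ultimately show thesis using that[of r E] run2 \<open>E i\<close> by blast
  next
    case (Some S)
    have "pair_run (u, v, IS) (LP a # u', [], S)"
      using pair_run_trans[OF run1] pair_run_exec_right[OF Some, of _ "[]"] by simp
    with pair_run_right_not_done[OF words(1) live u_type u_guarded] show thesis by blast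
  qed
qed

lemma pair_run_advance_left:
  assumes words: "set v \<subseteq> {LP a, LT a, LP b, LT b}" "set u' \<subseteq> {LP a, LT a, LP b, LT b}"
    and live: "\<not> blocked_pair_reachable ({#(u @ v, x), (v, y)#}, IS)"
    and v_type: "has_btype IS v (BT_PP b)"
    and v_guarded: "\<not> first_use_is_put a v"
    and run: "pair_run (u, v, IS) (LP a # u', LP b # v', C)" "C b" "\<not> C a"
  obtains u'' C' where "pair_run (u, v, IS) (LP a # u'', LP b # v', C')" "C' a" "\<not> C' b"
    "set u'' \<subseteq> set u'" "length u'' < length u'"
proof -
  have "set v \<subseteq> {LP b, LT b, LP a, LT a}" "set u' \<subseteq> {LP b, LT b, LP a, LT a}"
    using words by auto
  moreover have "\<not> blocked_pair_reachable ({#(v, y), (u @ v, x)#}, IS)"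
    using live by (simp add: add_mset_commute)
  moreover have "pair_run (v, u, IS) (LP b # v', LP a # u', C)"
    using run(1) pair_run_commute by blast
  ultimately show thesis
    using pair_run_advance_right[OF _ _ _ v_type v_guarded _ run(2,3)] that pair_run_commute
    by metis
qed

lemma pair_run_waiting_locks_empty:
  assumes words: "set u \<subseteq> {LP a, LT a, LP b, LT b}" "set v \<subseteq> {LP a, LT a, LP b, LT b}"
    and live_u: "\<not> blocked_pair_reachable ({#(u, x), (v @ u, y)#}, IS)"
    and live_v: "\<not> blocked_pair_reachable ({#(u @ v, x'), (v, y')#}, IS)"
    and u_type: "has_btype IS u (BT_PP a)" and v_type: "has_btype IS v (BT_PP b)"
    and "pair_run (u, v, IS) (LP a # u', LP b # v', C)"
    and "set u' \<subseteq> {LP a, LT a, LP b, LT b}" "set v' \<subseteq> {LP a, LT a, LP b, LT b}"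
  shows "\<not> C a \<and> \<not> C b"
proof -
  have u_guarded: "\<not> first_use_is_put b u"
  proof -
    obtain s r D where "v = s @ LP b # r" "exec_word IS s = Some D" "D b"
      using v_type by (rule has_btype_PPE)
    then show ?thesis using not_first_use_is_put[of u v x' v "[]" y'] live_v by simp
  qed
  have v_guarded: "\<not> first_use_is_put a v"
  proof -
    obtain s r D where "u = s @ LP a # r" "exec_word IS s = Some D" "D a"
      using u_type by (rule has_btype_PPE)
    then show ?thesis using not_first_use_is_put[of v u y u "[]" x] live_u by (simp add: add_mset_commute)
  qed
  show ?thesis
    using assms(7-9)
  proof (induction "length u' + length v'" arbitrary: u' v' C rule: less_induct)
    case less
    consider "C a" "C b" | "C a" "\<not> C b" | "\<not> C a" "C b" | "\<not> C a" "\<not> C b" by blast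
    then show ?case
    proof cases
      case 1
      then show ?thesis using pair_run_blocked[OF less.prems(1), of "[]" x u y] live_u by simp
    next
      case 2
      obtain v'' C' where "pair_run (u, v, IS) (LP a # u', LP b # v'', C')" "C' b"
        "set v'' \<subseteq> set v'" "length v'' < length v'"
        using pair_run_advance_right[OF words(1) less.prems(3) live_u u_type u_guarded less.prems(1) 2] .
      then show ?thesis using less.hyps[of u' v'' C'] less.prems(2,3) by auto
    next
      case 3
      obtain u'' C' where "pair_run (u, v, IS) (LP a # u'', LP b # v', C')" "C' a"
        "set u'' \<subseteq> set u'" "length u'' < length u'"
        using pair_run_advance_left[OF words(2) less.prems(2) live_v v_type v_guarded less.prems(1) 3(2,1)] .
      then show ?thesis using less.hyps[of u'' v' C'] less.prems(2,3) by auto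
    qed simp
  qed
qed

lemma correct_translation_no_blocked_pair:
  assumes "correct_translation k IS ws wr"
  shows "\<not> blocked_pair_reachable ({#(ws, True), (wr @ ws, True)#}, IS)"
    and "\<not> blocked_pair_reachable ({#(ws @ wr, False), (wr, True)#}, IS)"
proof -
  have must: "lock_must IS (tr ws wr P)" if "sync_must P" for P
    using assms that unfolding correct_translation_def by blast
  have "sync_must {#SSend SCheck, SRecv (SSend SCheck)#}"
    by (rule sync_must_pair) (auto dest: sync_step_offers)
  then show "\<not> blocked_pair_reachable ({#(ws, True), (wr @ ws, True)#}, IS)"
    using must lock_must_not_blocked_pair_reachable by (fastforce simp: tr_def)
  have "sync_must {#SSend (SRecv SZero), SRecv SCheck#}"
    by (rule sync_must_pair) (auto dest: sync_step_offers)
  then show "\<not> blocked_pair_reachable ({#(ws @ wr, False), (wr, True)#}, IS)"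
    using must lock_must_not_blocked_pair_reachable by (fastforce simp: tr_def)
qed

theorem lemma5p6:
  fixes IS :: locks and ws wr :: "lsym list"
  assumes "correct_translation 2 IS ws wr"
      and "has_btype IS ws (BT_PP 1)"
      and "has_btype IS wr (BT_PP 2)"
  shows "\<not> (\<exists>w. ws = LP 1 # w)"
proof
  assume "\<exists>w. ws = LP 1 # w"
  then obtain w where ws: "ws = LP 1 # w" ..
  have words: "set ws \<subseteq> {LP 1, LT 1, LP 2, LT 2}" "set wr \<subseteq> {LP 1, LT 1, LP 2, LT 2}"
    using assms(1) unfolding correct_translation_def word_over_def by fastforce+
  obtain s r D where wr: "wr = s @ LP 2 # r" "exec_word IS s = Some D" "D 2"
    using assms(3) by (rule has_btype_PPE)
  have "pair_run (ws, wr, IS) (LP 1 # w, LP 2 # r, D)"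
    using pair_run_exec_right[OF wr(2)] ws wr(1) by simp
  then show False
    using pair_run_waiting_locks_empty[OF words correct_translation_no_blocked_pair[OF assms(1)] assms(2,3)]
      words ws wr(1,3)
    by auto
qed
end
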